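(* Let $M\ge2$, $\mu_1,\dots,\mu_M>0$ and $p_1,\dots,p_{M-1}\in[0,1)$, and let $v_m=\prod_{i=1}^{m-1}p_i/\mu_m$ for $1\le m\le M$ (empty product $=1$), with $\sum_{m=1}^Mv_m=1$. For $2\le m\le M$ let $a_m=\frac{\mu_m}{p_1\mu_1+\mu_m}$ and $b_m=(1-a_m)\bigl(1+\sum_{r=m+1}^M\frac{v_r}{v_1}\bigr)-\frac{a_mv_m}{v_1}$, and let $\xi=\sum_{m=2}^Mb_m\prod_{j=m+1}^Ma_j$ (empty product $=1$, empty sum $=0$). Then $$1-\xi=\mu_1\prod_{m=2}^Ma_m.$$ *)

theory Defs
  imports Complex_Main
begin

text \<open>Indices are 1-based; mu and p are sequences indexed by nat.\<close>

definition vv :: "(nat \<Rightarrow> real) \<Rightarrow> (nat \<Rightarrow> real) \<Rightarrow> nat \<Rightarrow> real" where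
  "vv mu p m = (\<Prod>i\<in>{1..<m}. p i) / mu m"

definition aa :: "(nat \<Rightarrow> real) \<Rightarrow> (nat \<Rightarrow> real) \<Rightarrow> nat \<Rightarrow> real" where
  "aa mu p m = mu m / (p 1 * mu 1 + mu m)"

definition bb :: "nat \<Rightarrow> (nat \<Rightarrow> real) \<Rightarrow> (nat \<Rightarrow> real) \<Rightarrow> nat \<Rightarrow> real" where
  "bb M mu p m = (1 - aa mu p m) * (1 + (\<Sum>r\<in>{m+1..M}. vv mu p r / vv mu p 1))
                 - aa mu p m * vv mu p m / vv mu p 1"

definition xi :: "nat \<Rightarrow> (nat \<Rightarrow> real) \<Rightarrow> (nat \<Rightarrow> real) \<Rightarrow> real" where
  "xi M mu p = (\<Sum>m\<in>{2..M}. bb M mu p m * (\<Prod>j\<in>{m+1..M}. aa mu p j))"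

end

theory Submission
  imports Defs
begin

text \<open>Put \<open>w r = v r / v 1\<close> and \<open>F m = (1 + (\<Sum>r\<in>{m..M}. w r)) * (\<Prod>j\<in>{m..M}. a j)\<close>.
  The summand \<open>b m * (\<Prod>j\<in>{m+1..M}. a j)\<close> of \<open>\<xi>\<close> equals \<open>F (m+1) - F m\<close>, so \<open>\<xi>\<close>
  telescopes to \<open>1 - F 2\<close>, and the normalisation \<open>\<Sum> v = 1\<close> turns \<open>1 + (\<Sum>r\<in>{2..M}. w r)\<close>
  into \<open>1 / v 1 = \<mu> 1\<close>.\<close>

lemma sum_telescoping_weighted_products:
  fixes a w :: "nat \<Rightarrow> 'a::comm_ring_1"
  shows "(\<Sum>m\<in>{k..n}. ((1 - a m) * (1 + (\<Sum>r\<in>{m+1..n}. w r)) - a m * w m)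
            * (\<Prod>j\<in>{m+1..n}. a j))
         = 1 - (1 + (\<Sum>r\<in>{k..n}. w r)) * (\<Prod>j\<in>{k..n}. a j)"
proof (cases "k \<le> n")
  case True
  then show ?thesis
  proof (induction k rule: inc_induct)
    case base
    then show ?case by (simp add: algebra_simps)
  next
    case (step k)
    then show ?case
      by (simp add: sum.atLeast_Suc_atMost prod.atLeast_Suc_atMost algebra_simps)
  qed
next
  case False
  then show ?thesis by simp
qed

lemma sum_vv_div_vv_first:
  assumes "(\<Sum>m\<in>{1..M}. vv mu p m) = 1"
  shows "(\<Sum>r\<in>{1..M}. vv mu p r / vv mu p 1) = mu 1"
proof -
  have "(\<Sum>r\<in>{1..M}. vv mu p r / vv mu p 1) = 1 / vv mu p 1"
    using assms by (simp flip: sum_divide_distrib)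
  then show ?thesis
    by (simp add: vv_def)
qed

theorem lemma9:
  fixes M :: nat and mu p :: "nat \<Rightarrow> real"
  assumes "M \<ge> 2"
    and "\<And>m. 1 \<le> m \<Longrightarrow> m \<le> M \<Longrightarrow> mu m > 0"
    and "\<And>i. 1 \<le> i \<Longrightarrow> i \<le> M - 1 \<Longrightarrow> 0 \<le> p i \<and> p i < 1"
    and "(\<Sum>m\<in>{1..M}. vv mu p m) = 1"
  shows "1 - xi M mu p = mu 1 * (\<Prod>m\<in>{2..M}. aa mu p m)"
proof -
  define w where "w r = vv mu p r / vv mu p 1" for r
  have "vv mu p 1 \<noteq> 0"
    using assms(1) assms(2)[of 1] by (simp add: vv_def)
  then have "1 + (\<Sum>r\<in>{2..M}. w r) = (\<Sum>r\<in>{1..M}. w r)"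
    using assms(1) by (simp add: w_def sum.atLeast_Suc_atMost numeral_2_eq_2)
  also have "\<dots> = mu 1"
    unfolding w_def using assms(4) by (rule sum_vv_div_vv_first)
  finally have mu_first: "1 + (\<Sum>r\<in>{2..M}. w r) = mu 1" .
  have "xi M mu p = 1 - (1 + (\<Sum>r\<in>{2..M}. w r)) * (\<Prod>j\<in>{2..M}. aa mu p j)"
    using sum_telescoping_weighted_products[where a = "aa mu p" and w = w and k = 2 and n = M]
    by (simp add: xi_def bb_def w_def)
  then show ?thesis
    by (simp add: mu_first)
qed

end
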